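(* Fix a user $n$ and a server $m$, and fix constants $x_{n,m}\in\{0,1\}$, $\varphi_n\in[0,1]$, $d_n>0$, $\eta_m>0$, $\zeta_{n,m}\in(0,1]$, $f_m>0$, $\kappa_m>0$, $\omega_t\ge 0$, $\omega_e\ge 0$, and set $\omega_b=1$. For $\gamma_{n,m}\in(0,1)$ define $T^{(sp)}_{n,m}=\frac{x_{n,m}\varphi_n d_n\eta_m}{\gamma_{n,m}\zeta_{n,m}f_m}$, $T^{(sg)}_{n,m}=\frac{x_{n,m}\varphi_n d_n\omega_b\eta_m}{(1-\gamma_{n,m})\zeta_{n,m}f_m}$, $E^{(sp)}_{n,m}=\kappa_m x_{n,m}\varphi_n d_n\eta_m(\gamma_{n,m}\zeta_{n,m}f_m)^2$, $E^{(sg)}_{n,m}=\kappa_m x_{n,m}\varphi_n d_n\eta_m\omega_b\big[(1-\gamma_{n,m})\zeta_{n,m}f_m\big]^2$, and let $h(\gamma_{n,m})=\omega_t\big(T^{(sp)}_{n,m}+T^{(sg)}_{n,m}\big)+\omega_e\big(E^{(sp)}_{n,m}+E^{(sg)}_{n,m}\big)$ be the part of the server cost of user $n$ at server $m$ that depends on $\gamma_{n,m}$ when the block validation delay is disregarded. Then $\gamma_{n,m}^\star=\tfrac12$ is an optimal value of $\gamma_{n,m}$, i.e. $h(\tfrac12)\le h(\gamma_{n,m})$ for all $\gamma_{n,m}\in(0,1)$.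
   Context: Setting: a blockchain-enabled Metaverse system where user $n$ offloads a fraction $\varphi_n$ of its $d_n$ data bits to server $m$ (association indicator $x_{n,m}$). Server $m$ has maximum computing resource $f_m$ (cycles/s), allocates a fraction $\zeta_{n,m}$ of it to user $n$, and splits this allocation into a fraction $\gamma_{n,m}\in(0,1)$ used for processing the offloaded data and a fraction $1-\gamma_{n,m}$ used for generating the blockchain block. $\eta_m$ is the number of CPU cycles per bit at server $m$, $\kappa_m$ the effective switched capacitance of the server chip, $\omega_b$ the data size changing ratio between the offloaded data and the blockchain task, and $\omega_t,\omega_e$ the weights of delay and energy in the cost. $T^{(sp)},E^{(sp)}$ are the server processing delay and energy, and $T^{(sg)},E^{(sg)}$ the block generation delay and energy. *)

theory Defs
  imports Complex_Main
begin

definition T_sp :: "real \<Rightarrow> real \<Rightarrow> real \<Rightarrow> real \<Rightarrow> real \<Rightarrow> real \<Rightarrow> real \<Rightarrow> real" where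
  "T_sp x \<phi> d \<eta> \<zeta> f \<gamma> = x * \<phi> * d * \<eta> / (\<gamma> * \<zeta> * f)"

definition T_sg :: "real \<Rightarrow> real \<Rightarrow> real \<Rightarrow> real \<Rightarrow> real \<Rightarrow> real \<Rightarrow> real \<Rightarrow> real \<Rightarrow> real" where
  "T_sg x \<phi> d \<omega>b \<eta> \<zeta> f \<gamma> = x * \<phi> * d * \<omega>b * \<eta> / ((1 - \<gamma>) * \<zeta> * f)"

definition E_sp :: "real \<Rightarrow> real \<Rightarrow> real \<Rightarrow> real \<Rightarrow> real \<Rightarrow> real \<Rightarrow> real \<Rightarrow> real \<Rightarrow> real" where
  "E_sp \<kappa> x \<phi> d \<eta> \<zeta> f \<gamma> = \<kappa> * x * \<phi> * d * \<eta> * (\<gamma> * \<zeta> * f)^2"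

definition E_sg :: "real \<Rightarrow> real \<Rightarrow> real \<Rightarrow> real \<Rightarrow> real \<Rightarrow> real \<Rightarrow> real \<Rightarrow> real \<Rightarrow> real \<Rightarrow> real" where
  "E_sg \<kappa> x \<phi> d \<eta> \<omega>b \<zeta> f \<gamma> = \<kappa> * x * \<phi> * d * \<eta> * \<omega>b * ((1 - \<gamma>) * \<zeta> * f)^2"

definition h_cost :: "real \<Rightarrow> real \<Rightarrow> real \<Rightarrow> real \<Rightarrow> real \<Rightarrow> real \<Rightarrow> real \<Rightarrow> real \<Rightarrow> real \<Rightarrow> real \<Rightarrow> real \<Rightarrow> real" where
  "h_cost \<omega>t \<omega>e \<kappa> x \<phi> d \<eta> \<omega>b \<zeta> f \<gamma> =
     \<omega>t * (T_sp x \<phi> d \<eta> \<zeta> f \<gamma> + T_sg x \<phi> d \<omega>b \<eta> \<zeta> f \<gamma>)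
   + \<omega>e * (E_sp \<kappa> x \<phi> d \<eta> \<zeta> f \<gamma> + E_sg \<kappa> x \<phi> d \<eta> \<omega>b \<zeta> f \<gamma>)"

end

theory Submission
  imports Defs
begin

text \<open>For \<open>\<omega>b = 1\<close> the cost separates into a nonnegative multiple of
  \<open>1/\<gamma> + 1/(1 - \<gamma>)\<close> (delay) and a nonnegative multiple of \<open>\<gamma>\<^sup>2 + (1 - \<gamma>)\<^sup>2\<close>
  (energy). Both are symmetric under \<open>\<gamma> \<mapsto> 1 - \<gamma>\<close> and convex, hence minimal
  at \<open>\<gamma> = 1/2\<close>; each bound reduces to \<open>0 \<le> (\<gamma> - 1/2)\<^sup>2\<close>.\<close>

lemma inverse_add_inverse_one_minus_ge_four:
  fixes g :: real
  assumes "0 < g" and "g < 1"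
  shows "4 \<le> 1 / g + 1 / (1 - g)"
proof -
  have pos: "0 < g * (1 - g)" using assms by simp
  have "g * (1 - g) \<le> 1 / 4"
    using zero_le_power2[of "g - 1/2"] by (simp add: power2_eq_square algebra_simps)
  then have "4 \<le> 1 / (g * (1 - g))" using pos by (simp add: le_divide_eq)
  also have "\<dots> = 1 / g + 1 / (1 - g)" using assms by (simp add: field_simps)
  finally show ?thesis .
qed

lemma square_add_square_one_minus_ge_half:
  fixes g :: real
  shows "1 / 2 \<le> g\<^sup>2 + (1 - g)\<^sup>2"
  using zero_le_power2[of "g - 1/2"] by (simp add: power2_eq_square algebra_simps)

lemma h_cost_unit_ratio_eq:
  "h_cost \<omega>t \<omega>e \<kappa> x \<phi> d \<eta> 1 \<zeta> f g =
     \<omega>t * (x * \<phi> * d * \<eta> / (\<zeta> * f)) * (1 / g + 1 / (1 - g))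
   + \<omega>e * (\<kappa> * x * \<phi> * d * \<eta> * (\<zeta> * f)\<^sup>2) * (g\<^sup>2 + (1 - g)\<^sup>2)"
proof -
  have "T_sp x \<phi> d \<eta> \<zeta> f g + T_sg x \<phi> d 1 \<eta> \<zeta> f g
      = x * \<phi> * d * \<eta> / (\<zeta> * f) * (1 / g + 1 / (1 - g))"
    by (simp add: T_sp_def T_sg_def distrib_left add_divide_distrib divide_divide_eq_left ac_simps)
  moreover have "E_sp \<kappa> x \<phi> d \<eta> \<zeta> f g + E_sg \<kappa> x \<phi> d \<eta> 1 \<zeta> f g
      = \<kappa> * x * \<phi> * d * \<eta> * (\<zeta> * f)\<^sup>2 * (g\<^sup>2 + (1 - g)\<^sup>2)"
    by (simp add: E_sp_def E_sg_def power2_eq_square algebra_simps)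
  ultimately show ?thesis by (simp add: h_cost_def)
qed

theorem lemma4:
  fixes x \<phi> d \<eta> \<zeta> f \<kappa> \<omega>t \<omega>e \<omega>b \<gamma> :: real
  assumes "x \<in> {0, 1}"
    and "0 \<le> \<phi>" and "\<phi> \<le> 1"
    and "d > 0" and "\<eta> > 0"
    and "0 < \<zeta>" and "\<zeta> \<le> 1"
    and "f > 0" and "\<kappa> > 0"
    and "\<omega>t \<ge> 0" and "\<omega>e \<ge> 0"
    and "\<omega>b = 1"
    and "0 < \<gamma>" and "\<gamma> < 1"
  shows "h_cost \<omega>t \<omega>e \<kappa> x \<phi> d \<eta> \<omega>b \<zeta> f (1/2) \<le> h_cost \<omega>t \<omega>e \<kappa> x \<phi> d \<eta> \<omega>b \<zeta> f \<gamma>"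
proof -
  define delay where "delay = \<omega>t * (x * \<phi> * d * \<eta> / (\<zeta> * f))"
  define energy where "energy = \<omega>e * (\<kappa> * x * \<phi> * d * \<eta> * (\<zeta> * f)\<^sup>2)"
  have "0 \<le> delay" and "0 \<le> energy"
    using assms by (auto simp: delay_def energy_def intro!: mult_nonneg_nonneg divide_nonneg_pos)
  have "h_cost \<omega>t \<omega>e \<kappa> x \<phi> d \<eta> \<omega>b \<zeta> f (1/2) = delay * 4 + energy * (1 / 2)"
    by (simp add: \<open>\<omega>b = 1\<close> h_cost_unit_ratio_eq delay_def energy_def power2_eq_square)
  also have "\<dots> \<le> delay * (1 / \<gamma> + 1 / (1 - \<gamma>)) + energy * (\<gamma>\<^sup>2 + (1 - \<gamma>)\<^sup>2)"
    using \<open>0 \<le> delay\<close> \<open>0 \<le> energy\<close> assms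
    by (intro add_mono mult_left_mono inverse_add_inverse_one_minus_ge_four
        square_add_square_one_minus_ge_half)
  also have "\<dots> = h_cost \<omega>t \<omega>e \<kappa> x \<phi> d \<eta> \<omega>b \<zeta> f \<gamma>"
    by (simp add: \<open>\<omega>b = 1\<close> h_cost_unit_ratio_eq delay_def energy_def)
  finally show ?thesis .
qed

end
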